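(* Let $n\ge 3$ and let $A=[a_{ij}]$ be a real $n\times n$ matrix with zero diagonal, and let $f:\Sigma_n\to\mathbb{R}$, $f(\sigma)=\sum_{i=1}^{n-1}\sum_{j=i+1}^n a_{\sigma(i)\sigma(j)}$, be the LOP objective function with input matrix $A$. Then $\hat f_{(n-2,1,1)}=0$ if and only if $a_{ij}-a_{ji}+a_{jk}-a_{kj}=a_{ik}-a_{ki}$ for all $i,j,k\in\{1,\dots,n\}$.
   Context: $\Sigma_n$ is the symmetric group on $\{1,\dots,n\}$; $\sigma(k)$ is the row/column index placed in position $k$. For a partition $\lambda$ of $n$, $\rho_\lambda$ denotes the irreducible (matrix) representation of $\Sigma_n$ indexed by $\lambda$, and the Fourier coefficient of $f$ at $\lambda$ is $\hat f_\lambda=\sum_{\sigma\in\Sigma_n}f(\sigma)\rho_\lambda(\sigma)$. *)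

theory Defs
  imports Complex_Main "HOL-Combinatorics.Permutations"
begin

definition Sym :: "nat \<Rightarrow> (nat \<Rightarrow> nat) set" where
  "Sym n = {\<sigma>. \<sigma> permutes {1..n}}"

definition lop_obj :: "nat \<Rightarrow> (nat \<Rightarrow> nat \<Rightarrow> real) \<Rightarrow> (nat \<Rightarrow> nat) \<Rightarrow> real" where
  "lop_obj n a \<sigma> = (\<Sum>i=1..n-1. \<Sum>j=i+1..n. a (\<sigma> i) (\<sigma> j))"

text \<open>Partitions as nonincreasing lists of positive parts; Young diagram cells (row, column), 0-based.\<close>
definition is_partition :: "nat \<Rightarrow> nat list \<Rightarrow> bool" where
  "is_partition n lam \<longleftrightarrow> sum_list lam = n \<and> sorted_wrt (\<ge>) lam \<and> (\<forall>x\<in>set lam. 0 < x)"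

definition young_cells :: "nat list \<Rightarrow> (nat \<times> nat) set" where
  "young_cells lam = {(r, c). r < length lam \<and> c < lam ! r}"

definition tableau :: "nat \<Rightarrow> nat list \<Rightarrow> (nat \<times> nat \<Rightarrow> nat) \<Rightarrow> bool" where
  "tableau n lam t \<longleftrightarrow> bij_betw t (young_cells lam) {1..n}"

text \<open>The tabloid of t, represented by the sequence of its row sets.\<close>
definition tabloid :: "nat list \<Rightarrow> (nat \<times> nat \<Rightarrow> nat) \<Rightarrow> (nat \<Rightarrow> nat set)" where
  "tabloid lam t = (\<lambda>r. if r < length lam then {t (r, c) | c. c < lam ! r} else {})"

definition col_stab :: "nat \<Rightarrow> nat list \<Rightarrow> (nat \<times> nat \<Rightarrow> nat) \<Rightarrow> (nat \<Rightarrow> nat) set" where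
  "col_stab n lam t = {\<pi> \<in> Sym n. \<forall>(r, c) \<in> young_cells lam.
       \<exists>r'. (r', c) \<in> young_cells lam \<and> \<pi> (t (r, c)) = t (r', c)}"

text \<open>Action of the group-algebra element  sum_sigma f(sigma) sigma  on the polytabloid
  e_t = sum_{pi in C_t} sign(pi) {pi o t}, as a vector in the permutation module M^lam
  (a real-valued function on tabloids). The Specht module S^lam is spanned by the e_t,
  and rho_lam is the representation of Sigma_n on S^lam.\<close>
definition fourier_on_polytabloid ::
  "nat \<Rightarrow> nat list \<Rightarrow> ((nat \<Rightarrow> nat) \<Rightarrow> real) \<Rightarrow> (nat \<times> nat \<Rightarrow> nat) \<Rightarrow> (nat \<Rightarrow> nat set) \<Rightarrow> real" where
  "fourier_on_polytabloid n lam f t T =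
     (\<Sum>\<sigma>\<in>Sym n. f \<sigma> * (\<Sum>\<pi>\<in>col_stab n lam t.
         of_int (sign \<pi>) * (if tabloid lam (\<sigma> \<circ> \<pi> \<circ> t) = T then 1 else 0)))"

text \<open>hat f_lam = 0, i.e. the operator sum_sigma f(sigma) rho_lam(sigma) on the Specht module
  S^lam vanishes (equivalently: kills every polytabloid). This is independent of the
  choice of basis of S^lam.\<close>
definition fourier_coeff_zero :: "nat \<Rightarrow> nat list \<Rightarrow> ((nat \<Rightarrow> nat) \<Rightarrow> real) \<Rightarrow> bool" where
  "fourier_coeff_zero n lam f \<longleftrightarrow>
     (\<forall>t. tableau n lam t \<longrightarrow> (\<forall>T. fourier_on_polytabloid n lam f t T = 0))"

end

theory Submission
  imports Defs
begin

(* Let t be a tableau of shape (n-2,1,1) with first column x, y, z. Its column stabiliser is the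
   symmetric group on {x,y,z}, and a tabloid of this shape is determined by the entries u, v of
   its two one-box rows. Hence the coefficient of the tabloid (u,v) in hat f applied to e_t is
   the sum over sigma of f(sigma) times the sign of the permutation of {x,y,z} taking y, z to
   sigma^-1 u, sigma^-1 v. For the LOP objective this is a linear form in the a_kl whose
   coefficients, by symmetrising over Sigma_n, all reduce to two numbers, and one finds
     (n-2) * coefficient = c(u,v) * sum_{l <> u,v} (w_uv + w_vl + w_lu),   w_ij = a_ij - a_ji,
   with c(u,v) > 0 for the tableau whose first column is 3, 1, 2. So hat f vanishes iff all these
   cycle sums vanish. Summing w_uv + w_vl + w_lu over all l gives n w_uv = r_u - r_v with
   r_u = sum_l w_ul, so the cycle sums vanish iff w_ij + w_jk = w_ik. *)

definition triple_sign :: "nat \<Rightarrow> nat \<Rightarrow> nat \<Rightarrow> nat \<Rightarrow> nat \<Rightarrow> real" where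
  "triple_sign x y z p q =
     (\<Sum>\<pi>\<in>{\<pi>. \<pi> permutes {x,y,z}}. of_int (sign \<pi>) * (if \<pi> y = p \<and> \<pi> z = q then 1 else 0))"

lemma triple_sign_eq_0:
  assumes "p \<notin> {x,y,z} \<or> q \<notin> {x,y,z}"
  shows "triple_sign x y z p q = 0"
  unfolding triple_sign_def
proof (rule sum.neutral, safe)
  fix \<pi> assume "\<pi> permutes {x,y,z}"
  hence "\<pi> y \<in> {x,y,z}" "\<pi> z \<in> {x,y,z}" using permutes_in_image by fastforce+
  thus "of_int (sign \<pi>) * (if \<pi> y = p \<and> \<pi> z = q then 1 else 0) = (0::real)" using assms by auto
qed

lemma triple_sign_permute:
  assumes \<rho>: "\<rho> permutes {x,y,z}"
  shows "triple_sign x y z (\<rho> p) (\<rho> q) = of_int (sign \<rho>) * triple_sign x y z p q"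
proof -
  have perm: "permutation \<pi>" if "\<pi> permutes {x,y,z}" for \<pi>
    by (rule permutes_imp_permutation[OF _ that]) simp
  have \<rho>_eq: "\<rho> u = \<rho> w \<longleftrightarrow> u = w" for u w
    using permutes_inj[OF \<rho>] by (auto dest: injD)
  have "triple_sign x y z (\<rho> p) (\<rho> q) = (\<Sum>\<pi>\<in>{\<pi>. \<pi> permutes {x,y,z}}.
      of_int (sign (\<rho> \<circ> \<pi>)) * (if \<rho> (\<pi> y) = \<rho> p \<and> \<rho> (\<pi> z) = \<rho> q then 1 else 0))"
    unfolding triple_sign_def by (subst setum_permutations_compose_left[OF \<rho>]) simp
  also have "\<dots> = (\<Sum>\<pi>\<in>{\<pi>. \<pi> permutes {x,y,z}}.
      of_int (sign \<rho>) * (of_int (sign \<pi>) * (if \<pi> y = p \<and> \<pi> z = q then 1 else 0)))"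
    by (intro sum.cong refl) (simp add: \<rho>_eq sign_compose perm[OF \<rho>] perm)
  finally show ?thesis
    unfolding triple_sign_def by (simp add: sum_distrib_left)
qed

lemma triple_sign_swap:
  assumes "y \<noteq> z"
  shows "triple_sign x y z q p = - triple_sign x y z p q"
proof -
  let ?r = "transpose y z"
  have r: "?r permutes {x,y,z}" by (simp add: permutes_swap_id)
  have perm: "permutation \<pi>" if "\<pi> permutes {x,y,z}" for \<pi>
    by (rule permutes_imp_permutation[OF _ that]) simp
  have "triple_sign x y z q p = (\<Sum>\<pi>\<in>{\<pi>. \<pi> permutes {x,y,z}}.
      of_int (sign (\<pi> \<circ> ?r)) * (if \<pi> z = q \<and> \<pi> y = p then 1 else 0))"
    unfolding triple_sign_def by (subst sum_permutations_compose_right[OF r]) simp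
  also have "\<dots> = (\<Sum>\<pi>\<in>{\<pi>. \<pi> permutes {x,y,z}}.
      - (of_int (sign \<pi>) * (if \<pi> y = p \<and> \<pi> z = q then 1 else 0)))"
    using assms by (intro sum.cong refl) (auto simp: sign_compose sign_swap_id permutation_swap_id perm)
  finally show ?thesis
    unfolding triple_sign_def by (simp add: sum_negf)
qed

lemma triple_sign_diag: "y \<noteq> z \<Longrightarrow> triple_sign x y z p p = 0"
  using triple_sign_swap[of y z x p p] by simp

lemma triple_sign_base:
  assumes "x \<noteq> y" "x \<noteq> z"
  shows "triple_sign x y z y z = 1"
proof -
  have "\<pi> = id" if \<pi>: "\<pi> permutes {x,y,z}" "\<pi> y = y" "\<pi> z = z" for \<pi>
  proof -
    have "\<pi> x \<in> {x,y,z}" using permutes_in_image[OF \<pi>(1)] by simp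
    moreover have "\<pi> x \<noteq> y" "\<pi> x \<noteq> z"
      using \<pi> assms permutes_inj[OF \<pi>(1)] by (metis injD)+
    ultimately have "\<pi> x = x" by blast
    thus "\<pi> = id"
      using \<pi> permutes_not_in[OF \<pi>(1)] by (intro ext) (metis id_apply insertE singletonD)
  qed
  hence "triple_sign x y z y z = (\<Sum>\<pi>\<in>{\<pi>. \<pi> permutes {x,y,z}}. if \<pi> = id then 1 else 0)"
    unfolding triple_sign_def by (intro sum.cong refl) auto
  also have "\<dots> = 1" by (simp add: finite_permutations)
  finally show ?thesis .
qed

(* The coefficient of a k l in the expansion of sum_lop_obj_triple_sign. *)
definition order_coeff :: "nat set \<Rightarrow> nat \<Rightarrow> nat \<Rightarrow> nat \<Rightarrow> nat \<Rightarrow> nat \<Rightarrow> nat \<Rightarrow> nat \<Rightarrow> real" where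
  "order_coeff S x y z u v k l =
     (\<Sum>\<tau>\<in>{\<tau>. \<tau> permutes S}. (if \<tau> k < \<tau> l then 1 else 0) * triple_sign x y z (\<tau> u) (\<tau> v))"

lemma order_coeff_diag: "order_coeff S x y z u v k k = 0"
  by (simp add: order_coeff_def)

lemma order_coeff_permute:
  assumes "\<rho> permutes S"
  shows "order_coeff S x y z (\<rho> u) (\<rho> v) (\<rho> k) (\<rho> l) = order_coeff S x y z u v k l"
  unfolding order_coeff_def
  using sum_permutations_compose_right[OF assms,
      of "\<lambda>\<tau>. (if \<tau> k < \<tau> l then 1 else 0) * triple_sign x y z (\<tau> u) (\<tau> v)"]
  by simp

lemma sum_sum_mult_pattern:
  fixes a C :: "nat \<Rightarrow> nat \<Rightarrow> real"
  assumes fin: "finite S" and uv: "u \<in> S" "v \<in> S" "u \<noteq> v"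
    and C_uv: "C u v = A" "C v u = - A" "C u u = 0" "C v v = 0"
    and C_uvl: "\<And>l. l \<in> S - {u,v} \<Longrightarrow> C u l = B \<and> C l u = - B \<and> C v l = - B \<and> C l v = B"
    and C_rest: "\<And>k l. k \<in> S - {u,v} \<Longrightarrow> l \<in> S - {u,v} \<Longrightarrow> C k l = 0"
  shows "(\<Sum>k\<in>S. \<Sum>l\<in>S. a k l * C k l) =
     A * (a u v - a v u) + B * (\<Sum>l\<in>S-{u,v}. a u l - a l u - a v l + a l v)"
proof -
  let ?R = "S - {u,v}"
  have sum_split: "(\<Sum>l\<in>S. g l) = g u + g v + (\<Sum>l\<in>?R. g l)" for g :: "nat \<Rightarrow> real"
  proof -
    have "S = insert u (insert v ?R)" using uv by auto
    hence "sum g S = sum g (insert u (insert v ?R))" by (rule arg_cong)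
    thus ?thesis using fin uv by simp
  qed
  have row_u: "(\<Sum>l\<in>S. a u l * C u l) = a u v * A + B * (\<Sum>l\<in>?R. a u l)"
    using C_uv C_uvl by (simp add: sum_split sum_distrib_left mult.commute)
  have row_v: "(\<Sum>l\<in>S. a v l * C v l) = - a v u * A - B * (\<Sum>l\<in>?R. a v l)"
    using C_uv C_uvl uv by (simp add: sum_split sum_distrib_left mult.commute sum_negf)
  have row_k: "(\<Sum>l\<in>S. a k l * C k l) = B * (a k v - a k u)" if k: "k \<in> ?R" for k
    using C_uvl[OF k] C_rest[OF k] by (simp add: sum_split algebra_simps)
  have "(\<Sum>k\<in>S. \<Sum>l\<in>S. a k l * C k l)
      = (a u v * A + B * (\<Sum>l\<in>?R. a u l)) + (- a v u * A - B * (\<Sum>l\<in>?R. a v l))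
        + (\<Sum>k\<in>?R. B * (a k v - a k u))"
    by (simp only: sum_split[of "\<lambda>k. \<Sum>l\<in>S. a k l * C k l"] row_u row_v row_k cong: sum.cong)
  also have "\<dots> = A * (a u v - a v u) + B * (\<Sum>l\<in>?R. a u l - a l u - a v l + a l v)"
    by (simp add: algebra_simps sum.distrib sum_subtractf sum_distrib_left)
  finally show ?thesis .
qed

locale distinct_triple =
  fixes S :: "nat set" and x y z :: nat
  assumes fin: "finite S" and in_S: "x \<in> S" "y \<in> S" "z \<in> S"
    and distinct: "x \<noteq> y" "y \<noteq> z" "x \<noteq> z"
begin

lemma sum_permutes_fibre_triple_sign_eq_0:
  "(\<Sum>\<tau>\<in>{\<tau>. \<tau> permutes S}. if \<tau> u = p then triple_sign x y z p (\<tau> v) else 0) = 0"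
proof (cases "p \<in> {x,y,z}")
  case False
  hence "triple_sign x y z p q = 0" for q by (simp add: triple_sign_eq_0)
  thus ?thesis by (intro sum.neutral) simp
next
  case True
  obtain a b where ab: "a \<in> {x,y,z}" "b \<in> {x,y,z}" "a \<noteq> b" "p \<noteq> a" "p \<noteq> b"
  proof -
    from True have "p = x \<or> p = y \<or> p = z" by simp
    thus thesis using distinct that[of y z] that[of x z] that[of x y] by auto
  qed
  \<comment> \<open>Composing with the transposition of a and b preserves the fibre and flips the sign.\<close>
  let ?r = "transpose a b"
  let ?h = "\<lambda>\<tau>. if \<tau> u = p then triple_sign x y z p (\<tau> v) else 0"
  have r: "?r permutes S" using ab in_S by (auto intro: permutes_swap_id)
  have "sum ?h {\<tau>. \<tau> permutes S} = sum (\<lambda>\<tau>. ?h (?r \<circ> \<tau>)) {\<tau>. \<tau> permutes S}"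
    by (rule setum_permutations_compose_left[OF r])
  also have "\<dots> = sum (\<lambda>\<tau>. - ?h \<tau>) {\<tau>. \<tau> permutes S}"
  proof (rule sum.cong[OF refl])
    fix \<tau>
    have "?r (\<tau> u) = p \<longleftrightarrow> \<tau> u = p"
      using ab by (metis transpose_involutory transpose_apply_other)
    moreover have "triple_sign x y z p (?r (\<tau> v)) = - triple_sign x y z p (\<tau> v)"
      using triple_sign_permute[of ?r x y z p "\<tau> v"] ab
      by (simp add: permutes_swap_id sign_swap_id)
    ultimately show "?h (?r \<circ> \<tau>) = - ?h \<tau>" by auto
  qed
  finally show ?thesis by (simp add: sum_negf)
qed

lemma sum_permutes_triple_sign_eq_0:
  assumes u: "u \<in> S"
  shows "(\<Sum>\<tau>\<in>{\<tau>. \<tau> permutes S}. g (\<tau> u) * triple_sign x y z (\<tau> u) (\<tau> v)) = 0"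
proof -
  let ?P = "{\<tau>. \<tau> permutes S}"
  have "(\<Sum>\<tau>\<in>?P. g (\<tau> u) * triple_sign x y z (\<tau> u) (\<tau> v))
      = (\<Sum>\<tau>\<in>?P. \<Sum>p\<in>S. g p * (if \<tau> u = p then triple_sign x y z p (\<tau> v) else 0))"
  proof (rule sum.cong[OF refl])
    fix \<tau> assume "\<tau> \<in> ?P"
    hence "\<tau> u \<in> S" using u permutes_in_image by fastforce
    thus "g (\<tau> u) * triple_sign x y z (\<tau> u) (\<tau> v)
        = (\<Sum>p\<in>S. g p * (if \<tau> u = p then triple_sign x y z p (\<tau> v) else 0))"
      using fin by (simp add: if_distrib sum.delta cong: if_cong)
  qed
  also have "\<dots> = (\<Sum>p\<in>S. g p * (\<Sum>\<tau>\<in>?P. if \<tau> u = p then triple_sign x y z p (\<tau> v) else 0))"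
    by (subst sum.swap) (simp add: sum_distrib_left)
  also have "\<dots> = 0" by (simp add: sum_permutes_fibre_triple_sign_eq_0)
  finally show ?thesis .
qed

lemma order_coeff_swap: "order_coeff S x y z v u k l = - order_coeff S x y z u v k l"
  unfolding order_coeff_def sum_negf[symmetric]
  by (intro sum.cong refl) (subst triple_sign_swap[OF distinct(2)], simp)

lemma order_coeff_antisym:
  assumes "u \<in> S" "k \<noteq> l"
  shows "order_coeff S x y z u v l k = - order_coeff S x y z u v k l"
proof -
  have "order_coeff S x y z u v k l + order_coeff S x y z u v l k
      = (\<Sum>\<tau>\<in>{\<tau>. \<tau> permutes S}. (\<lambda>_. 1) (\<tau> u) * triple_sign x y z (\<tau> u) (\<tau> v))"
    unfolding order_coeff_def sum.distrib[symmetric]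
  proof (rule sum.cong[OF refl])
    fix \<tau> assume "\<tau> \<in> {\<tau>. \<tau> permutes S}"
    hence "\<tau> k \<noteq> \<tau> l" using assms permutes_inj by (fastforce dest: injD)
    thus "(if \<tau> k < \<tau> l then 1 else 0) * triple_sign x y z (\<tau> u) (\<tau> v)
        + (if \<tau> l < \<tau> k then 1 else 0) * triple_sign x y z (\<tau> u) (\<tau> v)
        = (\<lambda>_. 1) (\<tau> u) * triple_sign x y z (\<tau> u) (\<tau> v)" by auto
  qed
  also have "\<dots> = 0" by (rule sum_permutes_triple_sign_eq_0[OF assms(1)])
  finally show ?thesis by simp
qed

lemma order_coeff_outside:
  assumes "u \<in> S" "k \<in> S - {u,v}" "l \<in> S - {u,v}"
  shows "order_coeff S x y z u v k l = 0"
proof (cases "k = l")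
  case True
  thus ?thesis by (simp add: order_coeff_diag)
next
  case False
  have "order_coeff S x y z u v l k = order_coeff S x y z u v k l"
    using order_coeff_permute[of "transpose k l" S x y z u v k l] assms
    by (simp add: permutes_swap_id)
  thus ?thesis using order_coeff_antisym[OF assms(1) False] by simp
qed

lemma order_coeff_first_const:
  assumes "l \<in> S - {u,v}" "l' \<in> S - {u,v}"
  shows "order_coeff S x y z u v u l = order_coeff S x y z u v u l'"
  using order_coeff_permute[of "transpose l l'" S x y z u v u l] assms
  by (simp add: permutes_swap_id)

lemma order_coeff_second:
  assumes "u \<in> S" "v \<in> S" "l \<in> S - {u,v}"
  shows "order_coeff S x y z u v v l = - order_coeff S x y z u v u l"
  using order_coeff_permute[of "transpose u v" S x y z u v v l] order_coeff_swap[of u v u l] assms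
  by (simp add: permutes_swap_id)

lemma sum_order_coeff:
  assumes uv: "u \<in> S" "v \<in> S" "u \<noteq> v"
  shows "(\<Sum>l\<in>S-{u,v}. order_coeff S x y z u v u l) = - order_coeff S x y z u v u v"
proof -
  let ?P = "{\<tau>. \<tau> permutes S}"
  let ?E = "\<lambda>\<tau>. triple_sign x y z (\<tau> u) (\<tau> v)"
  \<comment> \<open>The number of l with \<tau> u < \<tau> l depends only on \<tau> u, so it is killed by
    sum_permutes_triple_sign_eq_0.\<close>
  define above :: "nat \<Rightarrow> real" where "above p = (\<Sum>r\<in>S. if p < r then 1 else 0)" for p
  have count: "(\<Sum>l\<in>S-{u,v}. if \<tau> u < \<tau> l then 1 else 0) = above (\<tau> u) - (if \<tau> u < \<tau> v then 1 else 0)"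
    if \<tau>: "\<tau> permutes S" for \<tau>
  proof -
    have "(\<Sum>l\<in>S. if \<tau> u < \<tau> l then 1 else 0) = above (\<tau> u)"
      unfolding above_def by (rule sum.reindex_bij_betw[OF permutes_imp_bij[OF \<tau>]])
    thus ?thesis using uv fin by (simp add: sum_diff)
  qed
  have "(\<Sum>l\<in>S-{u,v}. order_coeff S x y z u v u l)
      = (\<Sum>\<tau>\<in>?P. (\<Sum>l\<in>S-{u,v}. if \<tau> u < \<tau> l then 1 else 0) * ?E \<tau>)"
    unfolding order_coeff_def by (subst sum.swap) (simp add: sum_distrib_right)
  also have "\<dots> = (\<Sum>\<tau>\<in>?P. above (\<tau> u) * ?E \<tau>) - order_coeff S x y z u v u v"
    unfolding order_coeff_def sum_subtractf[symmetric]
    by (intro sum.cong refl) (simp add: count left_diff_distrib)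
  also have "\<dots> = - order_coeff S x y z u v u v"
    using sum_permutes_triple_sign_eq_0[OF uv(1)] by simp
  finally show ?thesis .
qed

lemma sum_sum_mult_order_coeff:
  assumes uv: "u \<in> S" "v \<in> S" "u \<noteq> v"
  shows "(real (card S) - 2) * (\<Sum>k\<in>S. \<Sum>l\<in>S. a k l * order_coeff S x y z u v k l)
    = order_coeff S x y z u v u v *
      (\<Sum>l\<in>S-{u,v}. (a u v - a v u) + (a v l - a l v) + (a l u - a u l))"
proof -
  let ?R = "S - {u,v}"
  let ?C = "order_coeff S x y z u v"
  have "3 \<le> card S"
    using card_mono[OF fin, of "{x,y,z}"] in_S distinct by simp
  moreover have "card ?R = card S - 2"
    using uv fin by (simp add: card_Diff_subset)
  ultimately have card_R: "real (card ?R) = real (card S) - 2" and "card ?R \<noteq> 0"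
    by (simp_all add: of_nat_diff)
  then obtain l0 where l0: "l0 \<in> ?R" by (metis card.empty ex_in_conv)
  define A where "A = ?C u v"
  define B where "B = ?C u l0"
  have C_ul: "?C u l = B" if "l \<in> ?R" for l
    unfolding B_def using that l0 by (rule order_coeff_first_const)
  have "(real (card S) - 2) * B = - A"
    using sum_order_coeff[OF uv] C_ul card_R by (simp add: A_def)
  hence A: "A = - ((real (card S) - 2) * B)" by simp
  have expand: "(\<Sum>k\<in>S. \<Sum>l\<in>S. a k l * ?C k l)
      = A * (a u v - a v u) + B * (\<Sum>l\<in>?R. a u l - a l u - a v l + a l v)"
  proof (rule sum_sum_mult_pattern[OF fin uv])
    show "?C u v = A" "?C v u = - A" "?C u u = 0" "?C v v = 0"
      using order_coeff_antisym[OF uv(1,3)] by (simp_all add: A_def order_coeff_diag)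
    fix l assume l: "l \<in> ?R"
    show "?C u l = B \<and> ?C l u = - B \<and> ?C v l = - B \<and> ?C l v = B"
      using C_ul[OF l] order_coeff_second[OF uv(1,2) l] l uv
        order_coeff_antisym[OF uv(1), of u l] order_coeff_antisym[OF uv(1), of v l]
      by auto
  next
    fix k l assume "k \<in> ?R" "l \<in> ?R"
    thus "?C k l = 0" using order_coeff_outside[OF uv(1)] by blast
  qed
  have "(\<Sum>l\<in>?R. (a u v - a v u) + (a v l - a l v) + (a l u - a u l))
      = (\<Sum>l\<in>?R. (a u v - a v u) - (a u l - a l u - a v l + a l v))"
    by (rule sum.cong) auto
  also have "\<dots> = (real (card S) - 2) * (a u v - a v u) - (\<Sum>l\<in>?R. a u l - a l u - a v l + a l v)"
    using card_R by (simp add: sum_subtractf)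
  finally have cycle_sum: "(\<Sum>l\<in>?R. (a u v - a v u) + (a v l - a l v) + (a l u - a u l))
      = (real (card S) - 2) * (a u v - a v u) - (\<Sum>l\<in>?R. a u l - a l u - a v l + a l v)" .
  have "(real (card S) - 2) * (A * w + B * d) = A * ((real (card S) - 2) * w - d)" for w d
    unfolding A by (simp add: algebra_simps)
  thus ?thesis
    unfolding expand cycle_sum A_def[symmetric] .
qed

end

lemma lop_obj_eq_sum_less:
  "lop_obj n a \<sigma> = (\<Sum>i\<in>{1..n}. \<Sum>j\<in>{1..n}. if i < j then a (\<sigma> i) (\<sigma> j) else 0)"
proof -
  have inner: "(\<Sum>j\<in>{1..n}. if i < j then a (\<sigma> i) (\<sigma> j) else 0) = (\<Sum>j=i+1..n. a (\<sigma> i) (\<sigma> j))" for i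
  proof -
    have "{j\<in>{1..n}. i < j} = {i+1..n}" by auto
    thus ?thesis by (simp add: sum.inter_filter[symmetric])
  qed
  show ?thesis
    unfolding lop_obj_def inner by (rule sum.mono_neutral_left) auto
qed

lemma lop_obj_inv:
  assumes \<tau>: "\<tau> permutes {1..n}"
  shows "lop_obj n a (inv \<tau>) = (\<Sum>k\<in>{1..n}. \<Sum>l\<in>{1..n}. if \<tau> k < \<tau> l then a k l else 0)"
proof -
  have bij: "bij_betw \<tau> {1..n} {1..n}" by (rule permutes_imp_bij[OF \<tau>])
  have inv: "inv \<tau> (\<tau> k) = k" for k by (rule permutes_inverses(2)[OF \<tau>])
  have "lop_obj n a (inv \<tau>) = (\<Sum>i\<in>{1..n}. \<Sum>j\<in>{1..n}. if i < j then a (inv \<tau> i) (inv \<tau> j) else 0)"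
    by (rule lop_obj_eq_sum_less)
  also have "\<dots> = (\<Sum>k\<in>{1..n}. \<Sum>j\<in>{1..n}. if \<tau> k < j then a (inv \<tau> (\<tau> k)) (inv \<tau> j) else 0)"
    by (rule sum.reindex_bij_betw[OF bij, symmetric])
  also have "\<dots> = (\<Sum>k\<in>{1..n}. \<Sum>l\<in>{1..n}. if \<tau> k < \<tau> l then a k l else 0)"
    unfolding inv by (rule sum.cong[OF refl]) (subst sum.reindex_bij_betw[OF bij, symmetric], simp only: inv)
  finally show ?thesis .
qed

lemma sum_lop_obj_triple_sign:
  "(\<Sum>\<sigma>\<in>{\<sigma>. \<sigma> permutes {1..n}}. lop_obj n a \<sigma> * triple_sign x y z (inv \<sigma> u) (inv \<sigma> v))
    = (\<Sum>k\<in>{1..n}. \<Sum>l\<in>{1..n}. a k l * order_coeff {1..n} x y z u v k l)"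
proof -
  let ?S = "{1..n}"
  let ?P = "{\<sigma>. \<sigma> permutes ?S}"
  let ?E = "\<lambda>\<tau>. triple_sign x y z (\<tau> u) (\<tau> v)"
  have "(\<Sum>\<sigma>\<in>?P. lop_obj n a \<sigma> * triple_sign x y z (inv \<sigma> u) (inv \<sigma> v))
      = (\<Sum>\<tau>\<in>?P. lop_obj n a (inv \<tau>) * ?E \<tau>)"
    by (subst sum_permutations_inverse) (intro sum.cong refl, simp add: permutes_inv_inv)
  also have "\<dots> = (\<Sum>\<tau>\<in>?P. \<Sum>k\<in>?S. \<Sum>l\<in>?S. a k l * ((if \<tau> k < \<tau> l then 1 else 0) * ?E \<tau>))"
    by (intro sum.cong refl) (auto simp: lop_obj_inv sum_distrib_right intro!: sum.cong)
  also have "\<dots> = (\<Sum>k\<in>?S. \<Sum>l\<in>?S. \<Sum>\<tau>\<in>?P. a k l * ((if \<tau> k < \<tau> l then 1 else 0) * ?E \<tau>))"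
    by (subst sum.swap) (intro sum.cong refl sum.swap)
  also have "\<dots> = (\<Sum>k\<in>?S. \<Sum>l\<in>?S. a k l * order_coeff ?S x y z u v k l)"
    by (simp add: order_coeff_def sum_distrib_left)
  finally show ?thesis .
qed

lemma skew_part_additive_if_cycle_sums_vanish:
  fixes a :: "'a \<Rightarrow> 'a \<Rightarrow> real"
  assumes fin: "finite S" and "S \<noteq> {}"
    and cycle: "\<And>u v. u \<in> S \<Longrightarrow> v \<in> S \<Longrightarrow> u \<noteq> v \<Longrightarrow>
      (\<Sum>l\<in>S-{u,v}. (a u v - a v u) + (a v l - a l v) + (a l u - a u l)) = 0"
    and ijk: "i \<in> S" "j \<in> S" "k \<in> S"
  shows "a i j - a j i + a j k - a k j = a i k - a k i"
proof -
  define W where "W u v = a u v - a v u" for u v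
  define R where "R u = (\<Sum>l\<in>S. W u l)" for u
  have full: "real (card S) * W u v + R v - R u = 0" if "u \<in> S" "v \<in> S" for u v
  proof -
    have "(\<Sum>l\<in>S. W u v + W v l + W l u) = (\<Sum>l\<in>S-{u,v}. W u v + W v l + W l u)"
      using fin that by (intro sum.mono_neutral_right) (auto simp: W_def)
    also have "\<dots> = 0"
      using cycle[OF that] by (cases "u = v") (simp_all add: W_def)
    moreover have "(\<Sum>l\<in>S. W l u) = - R u" unfolding R_def W_def by (simp add: sum_negf[symmetric])
    ultimately show ?thesis unfolding R_def by (simp add: sum.distrib)
  qed
  have "card S \<noteq> 0" using fin \<open>S \<noteq> {}\<close> by simp
  moreover have "real (card S) * (W i j + W j k) = real (card S) * W i k"
    using full[of i j] full[of j k] full[of i k] ijk by (simp add: algebra_simps)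
  ultimately show ?thesis unfolding W_def by simp
qed

definition pair_tabloid :: "nat \<Rightarrow> nat \<Rightarrow> nat \<Rightarrow> nat \<Rightarrow> nat set" where
  "pair_tabloid n p q =
     (\<lambda>r. if r = 0 then {1..n} - {p,q} else if r = 1 then {p} else if r = 2 then {q} else {})"

lemma pair_tabloid_eq_iff: "pair_tabloid n p q = pair_tabloid n p' q' \<longleftrightarrow> p = p' \<and> q = q'"
proof
  assume "pair_tabloid n p q = pair_tabloid n p' q'"
  hence "pair_tabloid n p q 1 = pair_tabloid n p' q' 1" "pair_tabloid n p q 2 = pair_tabloid n p' q' 2"
    by simp_all
  thus "p = p' \<and> q = q'" by (simp add: pair_tabloid_def)
qed simp

(* Stated with Suc 0, the simp normal form of 1, so that simp can rewrite with it. *)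
lemma mem_young_cells_hook:
  "(r, c) \<in> young_cells [m, Suc 0, Suc 0] \<longleftrightarrow> (r = 0 \<and> c < m) \<or> (r = 1 \<and> c = 0) \<or> (r = 2 \<and> c = 0)"
  by (auto simp: young_cells_def nth_Cons')

locale hook_tableau =
  fixes n :: nat and t :: "nat \<times> nat \<Rightarrow> nat"
  assumes n: "3 \<le> n" and tableau: "tableau n [n-2,1,1] t"
begin

abbreviation "x \<equiv> t (0,0)"
abbreviation "y \<equiv> t (1,0)"
abbreviation "z \<equiv> t (2,0)"

lemma bij: "bij_betw t (young_cells [n-2,1,1]) {1..n}"
  using tableau unfolding tableau_def .

lemma first_column_cells:
  "(0,0) \<in> young_cells [n-2,1,1]" "(1,0) \<in> young_cells [n-2,1,1]" "(2,0) \<in> young_cells [n-2,1,1]"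
  using n by (auto simp: mem_young_cells_hook)

lemma distinct_triple_first_column: "distinct_triple {1..n} x y z"
proof
  show "x \<in> {1..n}" "y \<in> {1..n}" "z \<in> {1..n}"
    using first_column_cells bij_betw_apply[OF bij] by blast+
  show "x \<noteq> y" "y \<noteq> z" "x \<noteq> z"
    using first_column_cells bij_betw_imp_inj_on[OF bij] by (auto dest: inj_onD)
qed simp

lemma permutes_first_column_imp_permutes: "\<pi> permutes {x,y,z} \<Longrightarrow> \<pi> permutes {1..n}"
  by (rule permutes_subset) (use distinct_triple.in_S[OF distinct_triple_first_column] in auto)

lemma first_row_image: "{t (0,c) | c. c < n - 2} = {1..n} - {y,z}"
proof -
  have "{t (0,c) | c. c < n - 2} = t ` (young_cells [n-2,1,1] - {(1,0),(2,0)})"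
    by (auto simp: mem_young_cells_hook)
  also have "\<dots> = {1..n} - {y,z}"
    using bij first_column_cells
    by (subst inj_on_image_set_diff[of _ "young_cells [n-2,1,1]"]) (auto simp: bij_betw_def)
  finally show ?thesis .
qed

lemma col_stab_hook: "col_stab n [n-2,1,1] t = {\<pi>. \<pi> permutes {x,y,z}}"
proof (intro set_eqI iffI)
  fix \<pi> assume "\<pi> \<in> col_stab n [n-2,1,1] t"
  hence \<pi>: "\<pi> permutes {1..n}"
    and col: "\<And>r c. (r,c) \<in> young_cells [n-2,1,1] \<Longrightarrow>
      \<exists>r'. (r',c) \<in> young_cells [n-2,1,1] \<and> \<pi> (t (r,c)) = t (r',c)"
    unfolding col_stab_def Sym_def by auto
  have "\<pi> w = w" if w: "w \<in> {1..n} - {x,y,z}" for w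
  proof -
    obtain c where c: "c < n - 2" "w = t (0,c)" using w first_row_image by blast
    with w have "c \<noteq> 0" by (intro notI) simp
    with c col[of 0 c] obtain r' where "(r',c) \<in> young_cells [n-2,1,1]" "\<pi> w = t (r',c)"
      by (auto simp: mem_young_cells_hook)
    thus ?thesis using c \<open>c \<noteq> 0\<close> by (auto simp: mem_young_cells_hook)
  qed
  thus "\<pi> \<in> {\<pi>. \<pi> permutes {x,y,z}}" using permutes_superset[OF \<pi>] by blast
next
  fix \<pi> assume "\<pi> \<in> {\<pi>. \<pi> permutes {x,y,z}}"
  hence \<pi>: "\<pi> permutes {x,y,z}" by simp
  have "\<exists>r'. (r',c) \<in> young_cells [n-2,1,1] \<and> \<pi> (t (r,c)) = t (r',c)"
    if rc: "(r,c) \<in> young_cells [n-2,1,1]" for r c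
  proof (cases "c = 0")
    case True
    hence "\<pi> (t (r,c)) \<in> {x,y,z}"
      using rc permutes_in_image[OF \<pi>] by (auto simp: mem_young_cells_hook)
    thus ?thesis using True first_column_cells by blast
  next
    case False
    hence "t (r,c) \<notin> {x,y,z}"
      using rc first_column_cells bij_betw_imp_inj_on[OF bij] by (auto dest: inj_onD)
    thus ?thesis using rc permutes_not_in[OF \<pi>] by blast
  qed
  moreover have "\<pi> permutes {1..n}" using \<pi> by (rule permutes_first_column_imp_permutes)
  ultimately show "\<pi> \<in> col_stab n [n-2,1,1] t"
    unfolding col_stab_def Sym_def by auto
qed

lemma tabloid_comp:
  assumes g: "g permutes {1..n}"
  shows "tabloid [n-2,1,1] (g \<circ> t) = pair_tabloid n (g y) (g z)"
proof
  fix r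
  have "{(g \<circ> t) (0,c) | c. c < n - 2} = g ` {t (0,c) | c. c < n - 2}" by auto
  also have "\<dots> = {1..n} - {g y, g z}"
    using permutes_inj[OF g] permutes_image[OF g] by (simp add: first_row_image image_set_diff)
  finally show "tabloid [n-2,1,1] (g \<circ> t) r = pair_tabloid n (g y) (g z) r"
    unfolding tabloid_def pair_tabloid_def by (auto simp: nth_Cons')
qed

lemma fourier_on_polytabloid_hook:
  "fourier_on_polytabloid n [n-2,1,1] f t T = (\<Sum>\<sigma>\<in>{\<sigma>. \<sigma> permutes {1..n}}. f \<sigma> *
     (\<Sum>\<pi>\<in>{\<pi>. \<pi> permutes {x,y,z}}.
        of_int (sign \<pi>) * (if pair_tabloid n (\<sigma> (\<pi> y)) (\<sigma> (\<pi> z)) = T then 1 else 0)))"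
  unfolding fourier_on_polytabloid_def Sym_def col_stab_hook
proof (intro sum.cong refl arg_cong2[where f = times])
  fix \<sigma> \<pi> assume "\<sigma> \<in> {\<sigma>. \<sigma> permutes {1..n}}" "\<pi> \<in> {\<pi>. \<pi> permutes {x,y,z}}"
  hence "\<sigma> \<circ> \<pi> permutes {1..n}"
    using permutes_compose[OF permutes_first_column_imp_permutes] by blast
  thus "(if tabloid [n-2,1,1] (\<sigma> \<circ> \<pi> \<circ> t) = T then 1 else 0)
      = (if pair_tabloid n (\<sigma> (\<pi> y)) (\<sigma> (\<pi> z)) = T then 1 else (0::real))"
    using tabloid_comp by (simp add: o_assoc)
qed

lemma fourier_on_pair_tabloid:
  "fourier_on_polytabloid n [n-2,1,1] f t (pair_tabloid n u v)
    = (\<Sum>\<sigma>\<in>{\<sigma>. \<sigma> permutes {1..n}}. f \<sigma> * triple_sign x y z (inv \<sigma> u) (inv \<sigma> v))"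
  unfolding fourier_on_polytabloid_hook triple_sign_def pair_tabloid_eq_iff
proof (intro sum.cong refl arg_cong2[where f = times])
  fix \<sigma> \<pi> assume "\<sigma> \<in> {\<sigma>. \<sigma> permutes {1..n}}"
  hence "\<sigma> w = u' \<longleftrightarrow> w = inv \<sigma> u'" for w u'
    using permutes_inverses by fastforce
  thus "(if \<sigma> (\<pi> y) = u \<and> \<sigma> (\<pi> z) = v then 1 else 0)
      = (if \<pi> y = inv \<sigma> u \<and> \<pi> z = inv \<sigma> v then 1 else (0::real))"
    by simp
qed

lemma fourier_on_polytabloid_not_pair:
  assumes "\<And>u v. u \<in> {1..n} \<Longrightarrow> v \<in> {1..n} \<Longrightarrow> pair_tabloid n u v \<noteq> T"
  shows "fourier_on_polytabloid n [n-2,1,1] f t T = 0"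
  unfolding fourier_on_polytabloid_hook
proof (intro sum.neutral ballI)
  fix \<sigma> assume \<sigma>: "\<sigma> \<in> {\<sigma>. \<sigma> permutes {1..n}}"
  have "(\<Sum>\<pi>\<in>{\<pi>. \<pi> permutes {x,y,z}}.
      of_int (sign \<pi>) * (if pair_tabloid n (\<sigma> (\<pi> y)) (\<sigma> (\<pi> z)) = T then 1 else 0)) = (0::real)"
  proof (intro sum.neutral ballI)
    fix \<pi> assume "\<pi> \<in> {\<pi>. \<pi> permutes {x,y,z}}"
    with \<sigma> have "\<sigma> \<circ> \<pi> permutes {1..n}"
      using permutes_compose[OF permutes_first_column_imp_permutes] by blast
    hence "\<sigma> (\<pi> y) \<in> {1..n}" "\<sigma> (\<pi> z) \<in> {1..n}"
      using distinct_triple.in_S[OF distinct_triple_first_column] by (metis comp_apply permutes_in_image)+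
    thus "of_int (sign \<pi>) * (if pair_tabloid n (\<sigma> (\<pi> y)) (\<sigma> (\<pi> z)) = T then 1 else 0) = (0::real)"
      using assms by simp
  qed
  thus "f \<sigma> * (\<Sum>\<pi>\<in>{\<pi>. \<pi> permutes {x,y,z}}.
      of_int (sign \<pi>) * (if pair_tabloid n (\<sigma> (\<pi> y)) (\<sigma> (\<pi> z)) = T then 1 else 0)) = 0"
    by simp
qed

lemma fourier_lop_obj_pair_tabloid:
  assumes uv: "u \<in> {1..n}" "v \<in> {1..n}"
  shows "(real n - 2) * fourier_on_polytabloid n [n-2,1,1] (lop_obj n a) t (pair_tabloid n u v)
    = order_coeff {1..n} x y z u v u v *
      (\<Sum>l\<in>{1..n}-{u,v}. (a u v - a v u) + (a v l - a l v) + (a l u - a u l))"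
proof (cases "u = v")
  case True
  thus ?thesis
    unfolding fourier_on_pair_tabloid
    using distinct_triple.distinct(2)[OF distinct_triple_first_column]
    by (simp add: triple_sign_diag order_coeff_diag)
next
  case False
  thus ?thesis
    unfolding fourier_on_pair_tabloid sum_lop_obj_triple_sign
    using distinct_triple.sum_sum_mult_order_coeff[OF distinct_triple_first_column uv False, of a]
    by simp
qed


lemma fourier_lop_obj_eq_0:
  assumes cycle: "\<And>u v. u \<in> {1..n} \<Longrightarrow> v \<in> {1..n} \<Longrightarrow> u \<noteq> v \<Longrightarrow>
    (\<Sum>l\<in>{1..n}-{u,v}. (a u v - a v u) + (a v l - a l v) + (a l u - a u l)) = 0"
  shows "fourier_on_polytabloid n [n-2,1,1] (lop_obj n a) t T = 0"
proof (cases "\<exists>u\<in>{1..n}. \<exists>v\<in>{1..n}. pair_tabloid n u v = T")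
  case True
  then obtain u v where uv: "u \<in> {1..n}" "v \<in> {1..n}" and T: "T = pair_tabloid n u v"
    by blast
  have "(real n - 2) * fourier_on_polytabloid n [n-2,1,1] (lop_obj n a) t (pair_tabloid n u v) = 0"
    unfolding fourier_lop_obj_pair_tabloid[OF uv]
    using cycle[OF uv] by (cases "u = v") (simp_all add: order_coeff_diag)
  thus ?thesis using n unfolding T by simp
next
  case False
  thus ?thesis by (intro fourier_on_polytabloid_not_pair) auto
qed

end

lemma exists_permutes_pair:
  assumes "p \<in> S" "q \<in> S" "p' \<in> S" "q' \<in> S" "p \<noteq> q" "p' \<noteq> q'"
  shows "\<exists>\<rho>. \<rho> permutes S \<and> \<rho> p = p' \<and> \<rho> q = q'"
proof -
  let ?p = "transpose q q' p"
  let ?\<rho> = "transpose ?p p' \<circ> transpose q q'"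
  have "?p \<in> S" using assms by (auto simp: transpose_def)
  hence "?\<rho> permutes S" using assms by (intro permutes_compose permutes_swap_id) auto
  moreover have "?\<rho> p = p'" "?\<rho> q = q'" using assms by (auto simp: transpose_def)
  ultimately show ?thesis by blast
qed

lemma triple_sign_312:
  "triple_sign 3 1 2 1 2 = 1" "triple_sign 3 1 2 1 3 = -1" "triple_sign 3 1 2 2 3 = 1"
proof -
  have "triple_sign 3 1 2 1 2 = 1" by (rule triple_sign_base) simp_all
  moreover have "triple_sign 3 1 2 1 3 = - triple_sign 3 1 2 1 2"
    using triple_sign_permute[of "transpose 2 3" 3 1 2 1 2]
    by (simp add: permutes_swap_id sign_swap_id)
  moreover have "triple_sign 3 1 2 2 3 = - triple_sign 3 1 2 1 3"
    using triple_sign_permute[of "transpose 1 2" 3 1 2 1 3]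
    by (simp add: permutes_swap_id sign_swap_id)
  ultimately show "triple_sign 3 1 2 1 2 = 1" "triple_sign 3 1 2 1 3 = -1" "triple_sign 3 1 2 2 3 = 1"
    by simp_all
qed

lemma sum_permutes_pair_indicator_eq:
  assumes "p \<in> S" "q \<in> S" "p' \<in> S" "q' \<in> S" "p \<noteq> q" "p' \<noteq> q'"
  shows "(\<Sum>\<tau>\<in>{\<tau>. \<tau> permutes S}. if \<tau> u = p' \<and> \<tau> v = q' then 1 else 0 :: real)
    = (\<Sum>\<tau>\<in>{\<tau>. \<tau> permutes S}. if \<tau> u = p \<and> \<tau> v = q then 1 else 0)"
proof -
  obtain \<rho> where \<rho>: "\<rho> permutes S" "\<rho> p = p'" "\<rho> q = q'"
    using exists_permutes_pair[OF assms] by blast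
  have "\<rho> w = \<rho> w' \<longleftrightarrow> w = w'" for w w' using permutes_inj[OF \<rho>(1)] by (auto dest: injD)
  thus ?thesis
    by (subst setum_permutations_compose_left[OF \<rho>(1)]) (simp add: \<rho>(2,3)[symmetric])
qed

lemma order_coeff_312_pos:
  assumes n: "3 \<le> n" and uv: "u \<in> {1..n}" "v \<in> {1..n}" "u \<noteq> v"
  shows "order_coeff {1..n} 3 1 2 u v u v > 0"
proof -
  let ?P = "{\<tau>. \<tau> permutes {1..n}}"
  define N where "N p q = (\<Sum>\<tau>\<in>?P. if \<tau> u = p \<and> \<tau> v = q then 1 else (0::real))" for p q
  have summand: "(if p < q then 1 else 0) * triple_sign 3 1 2 p q
      = (if p = 1 \<and> q = 2 then 1 else 0) + (if p = 2 \<and> q = 3 then 1 else 0)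
        - (if p = 1 \<and> q = 3 then 1 else 0)"
    if "p \<noteq> q" for p q :: nat
  proof (cases "p \<in> {3,1,2} \<and> q \<in> {3,1,2}")
    case False
    thus ?thesis using triple_sign_eq_0[of p 3 1 2 q] by auto
  next
    case True
    thus ?thesis using \<open>p \<noteq> q\<close> triple_sign_312 by auto
  qed
  have "order_coeff {1..n} 3 1 2 u v u v = (\<Sum>\<tau>\<in>?P. (if \<tau> u = 1 \<and> \<tau> v = 2 then 1 else 0)
      + (if \<tau> u = 2 \<and> \<tau> v = 3 then 1 else 0) - (if \<tau> u = 1 \<and> \<tau> v = 3 then 1 else 0))"
    unfolding order_coeff_def
  proof (rule sum.cong[OF refl])
    fix \<tau> assume "\<tau> \<in> ?P"
    hence "\<tau> u \<noteq> \<tau> v" using uv permutes_inj by (fastforce dest: injD)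
    thus "(if \<tau> u < \<tau> v then 1 else 0) * triple_sign 3 1 2 (\<tau> u) (\<tau> v)
      = (if \<tau> u = 1 \<and> \<tau> v = 2 then 1 else 0) + (if \<tau> u = 2 \<and> \<tau> v = 3 then 1 else 0)
        - (if \<tau> u = 1 \<and> \<tau> v = 3 then 1 else 0)"
      by (rule summand)
  qed
  also have "\<dots> = N 1 2 + N 2 3 - N 1 3" unfolding N_def by (simp add: sum.distrib sum_subtractf)
  also have "\<dots> = N 1 2"
    unfolding N_def
    using sum_permutes_pair_indicator_eq[of 1 "{1..n}" 2 2 3 u v]
      sum_permutes_pair_indicator_eq[of 1 "{1..n}" 2 1 3 u v] n
    by simp
  finally have "order_coeff {1..n} 3 1 2 u v u v = N 1 2" .
  moreover obtain \<tau> where \<tau>: "\<tau> permutes {1..n}" "\<tau> u = 1" "\<tau> v = 2"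
    using exists_permutes_pair[of u "{1..n}" v 1 2] uv n by auto
  have "(if \<tau> u = 1 \<and> \<tau> v = 2 then 1 else (0::real)) \<le> N 1 2"
    unfolding N_def by (rule member_le_sum) (use \<tau> finite_permutations[of "{1..n}"] in auto)
  ultimately show ?thesis using \<tau> by simp
qed

lemma tableau_hook_312:
  assumes "3 \<le> n"
  shows "tableau n [n-2,1,1] (\<lambda>(r,c). if r = 0 then c + 3 else r)"
  unfolding tableau_def
  by (rule bij_betw_byWitness[where f' = "\<lambda>w. if 3 \<le> w then (0, w - 3) else (w, 0)"])
    (use assms in \<open>auto simp: mem_young_cells_hook\<close>)

theorem proposition1:
  fixes n :: nat and a :: "nat \<Rightarrow> nat \<Rightarrow> real"
  assumes "n \<ge> 3"
    and "\<forall>i\<in>{1..n}. a i i = 0"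
  shows "fourier_coeff_zero n [n - 2, 1, 1] (lop_obj n a) \<longleftrightarrow>
    (\<forall>i\<in>{1..n}. \<forall>j\<in>{1..n}. \<forall>k\<in>{1..n}.
        a i j - a j i + a j k - a k j = a i k - a k i)"
proof -
  let ?cycle = "\<lambda>u v. \<Sum>l\<in>{1..n}-{u,v}. (a u v - a v u) + (a v l - a l v) + (a l u - a u l)"
  show ?thesis
  proof
    assume zero: "fourier_coeff_zero n [n - 2, 1, 1] (lop_obj n a)"
    define t0 :: "nat \<times> nat \<Rightarrow> nat" where "t0 = (\<lambda>(r,c). if r = 0 then c + 3 else r)"
    interpret t0: hook_tableau n t0
      using assms(1) tableau_hook_312[OF assms(1)] unfolding t0_def by unfold_locales
    have col0: "t0 (0,0) = 3" "t0 (1,0) = 1" "t0 (2,0) = 2" by (simp_all add: t0_def)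
    have "?cycle u v = 0" if uv: "u \<in> {1..n}" "v \<in> {1..n}" "u \<noteq> v" for u v
    proof -
      have "order_coeff {1..n} 3 1 2 u v u v * ?cycle u v = 0"
        using t0.fourier_lop_obj_pair_tabloid[OF uv(1,2), of a] zero t0.tableau
        unfolding fourier_coeff_zero_def col0 by simp
      thus ?thesis using order_coeff_312_pos[OF assms(1) uv] by simp
    qed
    thus "\<forall>i\<in>{1..n}. \<forall>j\<in>{1..n}. \<forall>k\<in>{1..n}. a i j - a j i + a j k - a k j = a i k - a k i"
      using skew_part_additive_if_cycle_sums_vanish[of "{1..n}"] assms(1) by simp
  next
    assume additive:
      "\<forall>i\<in>{1..n}. \<forall>j\<in>{1..n}. \<forall>k\<in>{1..n}. a i j - a j i + a j k - a k j = a i k - a k i"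
    have "?cycle u v = 0" if "u \<in> {1..n}" "v \<in> {1..n}" for u v
      using additive that by (intro sum.neutral) force
    thus "fourier_coeff_zero n [n - 2, 1, 1] (lop_obj n a)"
      unfolding fourier_coeff_zero_def
      using hook_tableau.fourier_lop_obj_eq_0 hook_tableau.intro assms(1) by blast
  qed
qed

end
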